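(* Let $g\in C^1$ be a Riemannian metric on $\mathbb{R}^D$ written as $g_x(u,u)=u^{\top}H(x)u$, with $c_1\|u\|_2^2\le g_x(u,u)$ for all $x,u$ (some $c_1>0$) and $\|H(x)-H(y)\|_{\mathcal{B}}\le L_H\|x-y\|_2$ for all $x,y$. Then for all $i,j,k$ and all $x$, $$|\Gamma^k_{ij}(x)|\le\frac{3L_HD^{1/2}}{2c_1}.$$
   Context: $g_{ij}=H_{ij}$, $(g^{ij})$ is the inverse matrix of $(g_{ij})$, and the Christoffel symbols are $\Gamma^k_{ij}=\frac12\sum_{\ell=1}^D g^{k\ell}\left(\frac{\partial g_{\ell j}}{\partial x_i}+\frac{\partial g_{i\ell}}{\partial x_j}-\frac{\partial g_{ij}}{\partial x_\ell}\right)$. $\|\cdot\|_{\mathcal{B}}$ is the operator norm. *)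

theory Defs
  imports "HOL-Analysis.Analysis"
begin

definition partial_mat :: "(real^'n \<Rightarrow> real^'n^'n) \<Rightarrow> 'n \<Rightarrow> real^'n \<Rightarrow> real^'n^'n" where
  "partial_mat H m x = frechet_derivative H (at x) (axis m 1)"

definition christoffel :: "(real^'n \<Rightarrow> real^'n^'n) \<Rightarrow> 'n \<Rightarrow> 'n \<Rightarrow> 'n \<Rightarrow> real^'n \<Rightarrow> real" where
  "christoffel H k i j x = (1/2) * (\<Sum>l\<in>UNIV. matrix_inv (H x) $ k $ l *
      (partial_mat H i x $ l $ j + partial_mat H j x $ i $ l - partial_mat H l x $ i $ j))"

end

theory Submission
  imports Defs
begin

text \<open>
  Lipschitz continuity of H bounds the operator norm of every partial derivative
  \<partial>_m H(x) by L_H, hence also each of its rows, columns and entries. The Christoffel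
  symbols of the first kind (\<partial>_i g_lj + \<partial>_j g_il - \<partial>_l g_ij) / 2, as a vector indexed by l,
  are half a column of \<partial>_i H plus half a row of \<partial>_j H minus half a vector of entries, so
  their norm is at most (2 + \<surd>D) L_H / 2 \<le> 3 \<surd>D L_H / 2. Finally \<Gamma>^k_ij is the k-th
  component of H(x)^-1 applied to that vector, and coercivity gives |H(x)^-1 a| \<le> |a| / c_1.
\<close>

lemma has_derivative_norm_le_Lipschitz:
  fixes f :: "'a::real_normed_vector \<Rightarrow> 'b::real_normed_vector"
  assumes deriv: "(f has_derivative D) (at x)"
    and Lipschitz: "\<And>y. norm (f y - f x) \<le> L * norm (y - x)"
  shows "norm (D e) \<le> L * norm e"
proof (cases "e = 0")
  case True
  with deriv show ?thesis
    by (simp add: has_derivative_bounded_linear linear_simps)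
next
  case False
  then have e_pos: "norm e > 0" by simp
  have linear: "bounded_linear D"
    using deriv by (rule has_derivative_bounded_linear)
  show ?thesis
  proof (rule field_le_epsilon)
    fix \<epsilon> :: real assume "\<epsilon> > 0"
    then obtain d where "d > 0" and d:
      "\<And>y. norm (y - x) < d \<Longrightarrow> norm (f y - f x - D (y - x)) \<le> \<epsilon> / norm e * norm (y - x)"
      using deriv e_pos unfolding has_derivative_at_alt by (meson divide_pos_pos)
    define t where "t = d / (2 * norm e)"
    have "t > 0" using \<open>d > 0\<close> e_pos by (simp add: t_def)
    have t_small: "norm (t *\<^sub>R e) < d"
      using \<open>d > 0\<close> e_pos by (simp add: t_def)
    have "t * norm (D e) = norm (D (t *\<^sub>R e))"
      using \<open>t > 0\<close> by (simp add: linear_simps linear)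
    also have "\<dots> \<le> norm (f (x + t *\<^sub>R e) - f x) + norm (f (x + t *\<^sub>R e) - f x - D (t *\<^sub>R e))"
      using norm_triangle_ineq4[of "f (x + t *\<^sub>R e) - f x" "f (x + t *\<^sub>R e) - f x - D (t *\<^sub>R e)"]
      by simp
    also have "\<dots> \<le> L * (t * norm e) + \<epsilon> / norm e * (t * norm e)"
      using Lipschitz[of "x + t *\<^sub>R e"] d[of "x + t *\<^sub>R e"] t_small \<open>t > 0\<close> by simp
    also have "\<dots> = t * (L * norm e + \<epsilon>)"
      using e_pos by (simp add: field_simps)
    finally show "norm (D e) \<le> L * norm e + \<epsilon>"
      using \<open>t > 0\<close> by simp
  qed
qed

lemma has_derivative_matrix_vector_norm_le:
  fixes H :: "'a::real_normed_vector \<Rightarrow> real^'n^'m"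
  assumes deriv: "(H has_derivative D) (at x)"
    and Lipschitz: "\<And>y. onorm (\<lambda>v. (H y - H x) *v v) \<le> L * norm (y - x)"
  shows "norm (D e *v v) \<le> L * norm e * norm v"
proof -
  have linear: "bounded_linear (\<lambda>M::real^'n^'m. M *v v)"
    by (rule linear_conv_bounded_linear[THEN iffD1], rule linearI)
      (simp_all add: matrix_vector_mult_add_rdistrib scaleR_matrix_vector_assoc)
  have "((\<lambda>y. H y *v v) has_derivative (\<lambda>e. D e *v v)) (at x)"
    using bounded_linear.has_derivative[OF linear deriv] .
  moreover have "norm (H y *v v - H x *v v) \<le> L * norm v * norm (y - x)" for y
  proof -
    have "norm (H y *v v - H x *v v) = norm ((H y - H x) *v v)"
      by (simp add: matrix_vector_mult_diff_rdistrib)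
    also have "\<dots> \<le> onorm (\<lambda>v. (H y - H x) *v v) * norm v"
      by (simp add: onorm)
    also have "\<dots> \<le> L * norm (y - x) * norm v"
      by (rule mult_right_mono[OF Lipschitz norm_ge_zero])
    finally show ?thesis by (simp add: ac_simps)
  qed
  ultimately have "norm (D e *v v) \<le> L * norm v * norm e"
    by (rule has_derivative_norm_le_Lipschitz)
  then show ?thesis by (simp add: ac_simps)
qed

lemma partial_mat_norm_le:
  fixes H :: "real^'n \<Rightarrow> real^'n^'n"
  assumes "H differentiable (at x)"
    and "\<And>y. onorm (\<lambda>v. (H y - H x) *v v) \<le> L * dist y x"
  shows "norm (partial_mat H m x *v v) \<le> L * norm v"
  using has_derivative_matrix_vector_norm_le[of H _ x L "axis m 1" v] assms
  by (simp add: partial_mat_def frechet_derivative_works dist_norm)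

lemma matrix_row_norm_le:
  fixes M :: "real^'n^'m"
  assumes bound: "\<And>v. norm (M *v v) \<le> L * norm v"
  shows "norm (M $ i) \<le> L"
proof (cases "M $ i = 0")
  case True
  have "0 \<le> L * norm (1::real^'n)"
    by (rule order_trans[OF norm_ge_zero bound])
  with True show ?thesis
    by (simp add: zero_le_mult_iff)
next
  case False
  have "norm (M $ i) ^ 2 = (M *v (M $ i)) $ i"
    by (simp add: power2_norm_eq_inner inner_vec_def matrix_vector_mult_def)
  also have "\<dots> \<le> norm (M *v (M $ i))"
    using component_le_norm_cart[of "M *v (M $ i)" i] by simp
  also have "\<dots> \<le> L * norm (M $ i)"
    by (rule bound)
  finally show ?thesis
    using False by (simp add: power2_eq_square)
qed

lemma norm_le_sqrt_card_if_components_le: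
  fixes x :: "real^'n"
  assumes "\<And>i. \<bar>x $ i\<bar> \<le> B"
  shows "norm x \<le> sqrt (real CARD('n)) * B"
proof -
  have "infnorm x \<le> B"
    unfolding infnorm_cart using assms by (auto intro!: cSup_least)
  have "norm x \<le> sqrt (real CARD('n)) * infnorm x"
    using norm_le_infnorm[of x] by simp
  also have "\<dots> \<le> sqrt (real CARD('n)) * B"
    using \<open>infnorm x \<le> B\<close> by (simp add: mult_left_mono)
  finally show ?thesis .
qed

lemma coercive_matrix_solution_norm_le:
  fixes A :: "real^'n^'n"
  assumes "c > 0" and coercive: "\<And>u. c * (norm u)^2 \<le> u \<bullet> (A *v u)"
    and "A *v y = a"
  shows "norm y \<le> norm a / c"
proof -
  have "c * (norm y)^2 \<le> norm y * norm a"
    using coercive[of y] Cauchy_Schwarz_ineq2[of y a] \<open>A *v y = a\<close> by simp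
  then have "c * norm y \<le> norm a"
    by (cases "y = 0") (auto simp: power2_eq_square)
  with \<open>c > 0\<close> show ?thesis
    by (simp add: pos_le_divide_eq mult.commute)
qed

lemma coercive_matrix_invertible:
  fixes A :: "real^'n^'n"
  assumes "c > 0" and "\<And>u. c * (norm u)^2 \<le> u \<bullet> (A *v u)"
  shows "invertible A"
proof -
  have "y = 0" if "A *v y = 0" for y
    using coercive_matrix_solution_norm_le[OF assms that] by simp
  then show ?thesis
    using matrix_left_invertible_ker invertible_left_inverse by blast
qed

lemma matrix_mul_matrix_inv_right:
  fixes A :: "'a::field^'n^'n"
  assumes "invertible A"
  shows "A ** matrix_inv A = mat 1"
  using someI_ex[OF assms[unfolded invertible_def]] unfolding matrix_inv_def by blast

definition christoffel_first_kind :: "(real^'n \<Rightarrow> real^'n^'n) \<Rightarrow> 'n \<Rightarrow> 'n \<Rightarrow> real^'n \<Rightarrow> real^'n" where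
  "christoffel_first_kind H i j x =
    (\<chi> l. (partial_mat H i x $ l $ j + partial_mat H j x $ i $ l - partial_mat H l x $ i $ j) / 2)"

lemma christoffel_eq_matrix_inv_first_kind:
  "christoffel H k i j x = (matrix_inv (H x) *v christoffel_first_kind H i j x) $ k"
  unfolding christoffel_def christoffel_first_kind_def
  by (simp add: matrix_vector_mult_def sum_divide_distrib field_simps)

lemma christoffel_first_kind_norm_le:
  fixes H :: "real^'n \<Rightarrow> real^'n^'n"
  assumes bound: "\<And>m v. norm (partial_mat H m x *v v) \<le> L * norm v"
  shows "norm (christoffel_first_kind H i j x) \<le> 3 * L * sqrt (real CARD('n)) / 2"
proof -
  let ?P = "\<lambda>m. partial_mat H m x" and ?sqrtD = "sqrt (real CARD('n))"
  have row: "norm (?P m $ a) \<le> L" for m a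
    using bound by (rule matrix_row_norm_le)
  have "0 \<le> L"
    by (rule order_trans[OF norm_ge_zero row])
  have entry: "\<bar>?P m $ a $ b\<bar> \<le> L" for m a b
    using component_le_norm_cart[of "?P m $ a" b] row[of m a] by linarith
  have entries: "norm (\<chi> l. ?P l $ i $ j) \<le> ?sqrtD * L"
    by (rule norm_le_sqrt_card_if_components_le) (simp add: entry)
  have "2 *\<^sub>R christoffel_first_kind H i j x = ?P i *v axis j 1 + ?P j $ i - (\<chi> l. ?P l $ i $ j)"
    by (simp add: christoffel_first_kind_def vec_eq_iff matrix_vector_mult_basis column_def)
  then have "2 * norm (christoffel_first_kind H i j x)
      = norm (?P i *v axis j 1 + ?P j $ i - (\<chi> l. ?P l $ i $ j))"
    by (metis norm_scaleR abs_numeral)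
  also have "\<dots> \<le> norm (?P i *v axis j 1) + norm (?P j $ i) + norm (\<chi> l. ?P l $ i $ j)"
    by (meson add_right_mono norm_triangle_ineq norm_triangle_ineq4 order_trans)
  also have "\<dots> \<le> L + L + ?sqrtD * L"
    using bound[of i "axis j 1"] row[of j i] entries by simp
  also have "\<dots> \<le> 3 * L * ?sqrtD"
    using mult_left_mono[of 1 ?sqrtD L] \<open>0 \<le> L\<close> by simp
  finally show ?thesis by simp
qed

theorem proposition7p10:
  fixes H :: "real^'n \<Rightarrow> real^'n^'n" and c1 L :: real
  assumes diff: "\<forall>x. H differentiable (at x)"
    and C1: "\<forall>v. continuous_on UNIV (\<lambda>x. frechet_derivative H (at x) v)"
    and sym: "\<forall>x. transpose (H x) = H x"
    and c1_pos: "c1 > 0"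
    and lower: "\<forall>x u. c1 * (norm u)^2 \<le> u \<bullet> (H x *v u)"
    and lip: "\<forall>x y. onorm (\<lambda>v. (H x - H y) *v v) \<le> L * dist x y"
  shows "\<forall>i j k x. \<bar>christoffel H k i j x\<bar> \<le> 3 * L * sqrt (real CARD('n)) / (2 * c1)"
proof (intro allI)
  fix i j k x
  let ?\<Gamma> = "christoffel_first_kind H i j x" and ?y = "matrix_inv (H x) *v christoffel_first_kind H i j x"
  have coercive: "\<And>u. c1 * (norm u)^2 \<le> u \<bullet> (H x *v u)"
    using lower by blast
  have "H x *v ?y = ?\<Gamma>"
    using matrix_mul_matrix_inv_right[OF coercive_matrix_invertible[OF c1_pos coercive]]
    by (simp add: matrix_vector_mul_assoc)
  then have "norm ?y \<le> norm ?\<Gamma> / c1"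
    by (rule coercive_matrix_solution_norm_le[OF c1_pos coercive])
  also have "\<dots> \<le> 3 * L * sqrt (real CARD('n)) / 2 / c1"
  proof (rule divide_right_mono)
    show "norm ?\<Gamma> \<le> 3 * L * sqrt (real CARD('n)) / 2"
      by (intro christoffel_first_kind_norm_le partial_mat_norm_le) (use diff lip in auto)
  qed (use c1_pos in simp)
  finally show "\<bar>christoffel H k i j x\<bar> \<le> 3 * L * sqrt (real CARD('n)) / (2 * c1)"
    using component_le_norm_cart[of ?y k]
    by (simp add: christoffel_eq_matrix_inv_first_kind)
qed

end
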